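(* Let $f_0,f_1\in \mathrm{PL}_0(\mathbf{I})$ satisfy $[f_1^{f_0},f_0f_1^{-1}]=1$ and $[f_0f_1^{-1},f_1^{f_0^2}]=1$. Let $A=(a,c)$ be an orbital of $f_0$ that is an up-bump, and suppose $(a,c)$ is not an orbital of $f_1$. Let $(b_1,d_1),(b_2,d_2),\dots,(b_n,d_n)$, with $n\ge1$, be all the orbitals of $f_1$ that meet $(a,c)$, in increasing order. Then: (i) $a<b_1$; (ii) there is a point $p<c$ such that $f_0|_{[p,c]}=f_1|_{[p,c]}$; (iii) $d_n=c$; (iv) if $p$ is the minimal point such that $f_0|_{[p,c]}=f_1|_{[p,c]}$, then $b_nf_0\ge p$; (v) $b_1f_0>b_n$.
   Context: $\mathrm{PL}_0(\mathbf{I})$ is the group of orientation-preserving piecewise-linear homeomorphisms of $[0,1]$ with finitely many points of non-differentiability. Functions act on the right: $tf=f(t)$, $fg=g\circ f$, $a^b=b^{-1}ab$, $[a,b]=aba^{-1}b^{-1}$. The orbitals of $f$ are the connected components (open intervals) of $\operatorname{Supp}(f)=\{x: xf\ne x\}$; an orbital $A$ is an up-bump if $xf>x$ for all $x\in A$. Orbitals are ordered by $A<B$ if every point of $A$ is less than every point of $B$. *)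

theory Defs
  imports "HOL-Analysis.Analysis"
begin

definition PL0 :: "(real \<Rightarrow> real) \<Rightarrow> bool" where
  "PL0 f \<longleftrightarrow>
     bij_betw f {0..1} {0..1} \<and> strict_mono_on {0..1} f \<and>
     (\<forall>x. x \<notin> {0..1} \<longrightarrow> f x = x) \<and>
     (\<exists>T. finite T \<and> {0,1} \<subseteq> T \<and> T \<subseteq> {0..1} \<and>
        (\<forall>u\<in>T. \<forall>v\<in>T. u < v \<and> {u<..<v} \<inter> T = {} \<longrightarrow>
           (\<exists>m k. \<forall>x\<in>{u..v}. f x = m * x + k)))"

text \<open>Right action: t(fg) = g(f(t)).\<close>
definition rmul :: "(real \<Rightarrow> real) \<Rightarrow> (real \<Rightarrow> real) \<Rightarrow> (real \<Rightarrow> real)" where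
  "rmul f g = g \<circ> f"

definition rinv :: "(real \<Rightarrow> real) \<Rightarrow> (real \<Rightarrow> real)" where
  "rinv f = inv f"

definition conjg :: "(real \<Rightarrow> real) \<Rightarrow> (real \<Rightarrow> real) \<Rightarrow> (real \<Rightarrow> real)" where
  "conjg a b = rmul (rmul (rinv b) a) b"

definition commg :: "(real \<Rightarrow> real) \<Rightarrow> (real \<Rightarrow> real) \<Rightarrow> (real \<Rightarrow> real)" where
  "commg a b = rmul (rmul (rmul a b) (rinv a)) (rinv b)"

definition supp :: "(real \<Rightarrow> real) \<Rightarrow> real set" where
  "supp f = {x. f x \<noteq> x}"

definition orbital :: "(real \<Rightarrow> real) \<Rightarrow> real set \<Rightarrow> bool" where
  "orbital f A \<longleftrightarrow> A \<in> components (supp f)"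

definition up_bump :: "(real \<Rightarrow> real) \<Rightarrow> real set \<Rightarrow> bool" where
  "up_bump f A \<longleftrightarrow> orbital f A \<and> (\<forall>x\<in>A. f x > x)"

end

(*
  Write g = f0 f1^-1 (functions act on the right).  The hypotheses say that g commutes with the
  conjugates f1^f0 and f1^(f0^2).  Commuting PL homeomorphisms interact rigidly: each fixes the
  ends of the other's orbitals, and on such an orbital it is either the identity or free of fixed
  points, because the dynamics push a fixed point towards an end, where the map is affine.
  Applied to the orbital (phi p, phi q) of f1^phi, phi = f0 or f0^2, this shows that every orbital
  (p, q) of f1 yields, for each phi, either an orbital of g or an interval on which f0 = f1.
  Inside the up-bump (a, c) the two images overlap, so they cannot both be orbitals of g unless
  f0 fixes p and q; comparing them with the points that g is forced to fix gives (ii)-(v).  For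
  (i), an orbital of f1 reaching across a would be an orbital of g on which f1^f0 = f1^(f0^2),
  since their germs agree at the common fixed end; then f0 and f1 commute there, and f0 would be
  the identity on it.
*)

theory Submission
  imports Defs
begin

section \<open>Affine pieces and PL homeomorphisms of the line\<close>

definition affine_on :: "real set \<Rightarrow> (real \<Rightarrow> real) \<Rightarrow> bool" where
  "affine_on S f \<longleftrightarrow> (\<exists>m k. \<forall>y\<in>S. f y = m * y + k)"

lemma affine_on_subset: "affine_on T f \<Longrightarrow> S \<subseteq> T \<Longrightarrow> affine_on S f"
  unfolding affine_on_def by blast

lemma affine_on_comp:
  assumes "affine_on S h" and "h ` S \<subseteq> T" and "affine_on T f"
  shows "affine_on S (f \<circ> h)"
proof -
  obtain m1 k1 where h: "\<forall>y\<in>S. h y = m1 * y + k1" using assms(1) unfolding affine_on_def by blast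
  obtain m2 k2 where f: "\<forall>y\<in>T. f y = m2 * y + k2" using assms(3) unfolding affine_on_def by blast
  have "\<forall>y\<in>S. (f \<circ> h) y = (m2 * m1) * y + (m2 * k1 + k2)"
    using h f assms(2) by (auto simp: algebra_simps)
  then show ?thesis by (auto simp: affine_on_def)
qed

lemma affine_on_inv:
  assumes "inj f" and "affine_on S f"
  shows "affine_on (f ` S) (inv f)"
proof -
  obtain m k where f: "\<forall>y\<in>S. f y = m * y + k" using assms(2) by (auto simp: affine_on_def)
  show ?thesis
  proof (cases "m = 0")
    case True
    then have "\<forall>w\<in>f ` S. inv f w = 0 * w + inv f k" using f by auto
    then show ?thesis unfolding affine_on_def by blast
  next
    case False
    have "\<forall>y\<in>S. inv f (f y) = (1/m) * f y + (-k/m)"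
    proof
      fix y assume "y \<in> S"
      then have "(1/m) * f y + (-k/m) = y" using f False by (simp add: field_simps)
      then show "inv f (f y) = (1/m) * f y + (-k/m)" using inv_f_f[OF assms(1)] by simp
    qed
    then show ?thesis unfolding affine_on_def by blast
  qed
qed

lemma affine_on_eq_id:
  assumes "affine_on S f" and "u \<in> S" "v \<in> S" "u \<noteq> v" "f u = u" "f v = v"
  shows "\<forall>y\<in>S. f y = y"
proof -
  obtain m k where f: "\<forall>y\<in>S. f y = m * y + k" using assms(1) unfolding affine_on_def by blast
  have "(m - 1) * (v - u) = (m * v + k - v) - (m * u + k - u)" by (simp add: algebra_simps)
  also have "\<dots> = 0" using f assms by simp
  finally have "m = 1" using assms(4) by simp
  then show ?thesis using f assms by auto
qed

text \<open>Elements of \<open>PL\<^sub>0(I)\<close> extended by the identity, described by one-sided affine germs,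
  so that closure under composition and inversion is evident.\<close>

definition pl_homeo :: "(real \<Rightarrow> real) \<Rightarrow> bool" where
  "pl_homeo f \<longleftrightarrow> strict_mono f \<and> surj f \<and> (\<forall>x. x \<notin> {0..1} \<longrightarrow> f x = x) \<and>
     (\<forall>x. \<exists>e>0. affine_on {x..x+e} f) \<and> (\<forall>x. \<exists>e>0. affine_on {x-e..x} f)"

context
  fixes f :: "real \<Rightarrow> real"
  assumes f: "pl_homeo f"
begin

lemma pl_homeo_strict_mono: "strict_mono f"
  and pl_homeo_surj: "surj f"
  and pl_homeo_outside: "x \<notin> {0..1} \<Longrightarrow> f x = x"
  and pl_homeo_right_germ: "\<exists>e>0. affine_on {x..x+e} f"
  and pl_homeo_left_germ: "\<exists>e>0. affine_on {x-e..x} f"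
  using f by (simp_all add: pl_homeo_def)

lemma pl_homeo_inj: "inj f"
  using pl_homeo_strict_mono strict_mono_imp_inj_on by blast

lemma pl_homeo_bij: "bij f"
  by (simp add: pl_homeo_inj pl_homeo_surj bij_def)

lemma pl_homeo_inv_f [simp]: "inv f (f x) = x"
  by (rule inv_f_f[OF pl_homeo_inj])

lemma pl_homeo_f_inv [simp]: "f (inv f x) = x"
  by (rule surj_f_inv_f[OF pl_homeo_surj])

lemma pl_homeo_less_iff [simp]: "f x < f y \<longleftrightarrow> x < y"
  by (rule strict_mono_less[OF pl_homeo_strict_mono])

lemma pl_homeo_le_iff [simp]: "f x \<le> f y \<longleftrightarrow> x \<le> y"
  by (rule strict_mono_less_eq[OF pl_homeo_strict_mono])

lemma pl_homeo_eq_iff [simp]: "f x = f y \<longleftrightarrow> x = y"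
  using pl_homeo_inj injD by metis

lemma pl_homeo_isCont: "isCont f x"
proof -
  have cont: "continuous_on S f" if aff: "affine_on S f" for S
  proof -
    obtain m k where mk: "\<forall>y\<in>S. f y = m * y + k" using aff unfolding affine_on_def by blast
    have "continuous_on S (\<lambda>y. m * y + k)" by (intro continuous_intros)
    then show ?thesis by (rule continuous_on_eq) (simp add: mk)
  qed
  obtain e1 where e1: "e1 > 0" "affine_on {x..x+e1} f" using pl_homeo_right_germ by blast
  obtain e2 where e2: "e2 > 0" "affine_on {x-e2..x} f" using pl_homeo_left_germ by blast
  have "continuous_on ({x-e2..x} \<union> {x..x+e1}) f"
    by (rule continuous_on_closed_Un) (simp_all add: cont e1 e2)
  moreover have "{x-e2..x} \<union> {x..x+e1} = {x-e2..x+e1}"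
    using e1 e2 by auto
  moreover have "x \<in> interior {x-e2..x+e1}"
    using e1 e2 by simp
  ultimately show ?thesis
    by (metis continuous_on_interior)
qed

lemma pl_homeo_continuous_on: "continuous_on S f"
  using pl_homeo_isCont continuous_at_imp_continuous_on by blast

lemma pl_homeo_fixes_outside_open: "x \<le> 0 \<or> 1 \<le> x \<Longrightarrow> f x = x"
proof -
  have "closed {y. f y = y}"
    by (intro closed_Collect_eq pl_homeo_continuous_on continuous_on_id)
  moreover have "{..<0} \<union> {1<..} \<subseteq> {y. f y = y}"
    using pl_homeo_outside by auto
  ultimately have "closure ({..<0} \<union> {1<..}) \<subseteq> {y. f y = y}"
    by (rule closure_minimal[rotated])
  then show "x \<le> 0 \<or> 1 \<le> x \<Longrightarrow> f x = x"
    by auto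
qed

lemma pl_homeo_image_atLeastAtMost: "f ` {u..v} = {f u..f v}"
proof
  show "{f u..f v} \<subseteq> f ` {u..v}"
  proof
    fix w assume "w \<in> {f u..f v}"
    then have "inv f w \<in> {u..v}"
      using pl_homeo_le_iff[of u "inv f w"] pl_homeo_le_iff[of "inv f w" v] by simp
    then show "w \<in> f ` {u..v}" by (intro image_eqI[where x="inv f w"]) simp_all
  qed
qed auto

lemma pl_homeo_affine_on_inv: "affine_on {u..v} f \<Longrightarrow> affine_on {f u..f v} (inv f)"
  using affine_on_inv[OF pl_homeo_inj] pl_homeo_image_atLeastAtMost by metis

lemma pl_homeo_small_step:
  assumes "d > 0"
  shows "\<exists>e>0. f (x+e) \<le> f x + d \<and> f x - d \<le> f (x-e)"
proof -
  obtain e where e: "e > 0" "\<forall>y. dist y x < e \<longrightarrow> dist (f y) (f x) < d"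
    using pl_homeo_isCont[of x] assms unfolding continuous_at_eps_delta by blast
  then have "\<bar>f (x + e/2) - f x\<bar> < d" "\<bar>f (x - e/2) - f x\<bar> < d"
    using e(2)[rule_format, of "x + e/2"] e(2)[rule_format, of "x - e/2"] by (simp_all add: dist_real_def)
  then show ?thesis using e(1) by (intro exI[of _ "e/2"]) auto
qed

end

lemma pl_homeo_comp:
  assumes f: "pl_homeo f" and h: "pl_homeo h"
  shows "pl_homeo (f \<circ> h)"
proof -
  have "\<exists>e>0. affine_on {x..x+e} (f \<circ> h) \<and> affine_on {x-e..x} (f \<circ> h)" for x
  proof -
    obtain r1 where r1: "r1 > 0" "affine_on {x..x+r1} h" using pl_homeo_right_germ[OF h] by blast
    obtain l1 where l1: "l1 > 0" "affine_on {x-l1..x} h" using pl_homeo_left_germ[OF h] by blast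
    obtain r2 where r2: "r2 > 0" "affine_on {h x..h x+r2} f" using pl_homeo_right_germ[OF f] by blast
    obtain l2 where l2: "l2 > 0" "affine_on {h x-l2..h x} f" using pl_homeo_left_germ[OF f] by blast
    obtain e where e: "e > 0" "h (x+e) \<le> h x + min r2 l2" "h x - min r2 l2 \<le> h (x-e)"
      using pl_homeo_small_step[OF h, of "min r2 l2" x] r2 l2 by auto
    define e' where "e' = min e (min r1 l1)"
    have e': "e' > 0" "e' \<le> e" "e' \<le> r1" "e' \<le> l1" using e r1 l1 by (auto simp: e'_def)
    have "h (x+e') \<le> h x + r2" "h x - l2 \<le> h (x-e')"
      using e e' pl_homeo_le_iff[OF h, of "x+e'" "x+e"] pl_homeo_le_iff[OF h, of "x-e" "x-e'"] by auto
    then have "h ` {x..x+e'} \<subseteq> {h x..h x+r2}" "h ` {x-e'..x} \<subseteq> {h x-l2..h x}"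
      unfolding pl_homeo_image_atLeastAtMost[OF h] by auto
    moreover have "affine_on {x..x+e'} h" "affine_on {x-e'..x} h"
      using affine_on_subset r1(2) l1(2) e' by (auto simp: subset_eq)
    ultimately show ?thesis using affine_on_comp r2(2) l2(2) e'(1) by blast
  qed
  moreover have "strict_mono (f \<circ> h)"
    using pl_homeo_strict_mono[OF f] pl_homeo_strict_mono[OF h] by (simp add: strict_mono_def)
  moreover have "surj (f \<circ> h)"
    using pl_homeo_surj[OF f] pl_homeo_surj[OF h] by (rule comp_surj[rotated])
  moreover have "(f \<circ> h) x = x" if "x \<notin> {0..1}" for x
    using pl_homeo_outside[OF f that] pl_homeo_outside[OF h that] by simp
  ultimately show ?thesis unfolding pl_homeo_def by blast
qed

lemma pl_homeo_inv:
  assumes f: "pl_homeo f"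
  shows "pl_homeo (inv f)"
proof -
  have "\<exists>e>0. affine_on {z..z+e} (inv f)" for z
  proof -
    obtain e where e: "e > 0" "affine_on {inv f z..inv f z + e} f"
      using pl_homeo_right_germ[OF f] by blast
    then have "affine_on {z..z + (f (inv f z + e) - z)} (inv f)"
      using pl_homeo_affine_on_inv[OF f] f by fastforce
    moreover have "z < f (inv f z + e)" using f e(1) pl_homeo_less_iff[OF f, of "inv f z"] by simp
    ultimately show ?thesis by (intro exI[of _ "f (inv f z + e) - z"]) simp
  qed
  moreover have "\<exists>e>0. affine_on {z-e..z} (inv f)" for z
  proof -
    obtain e where e: "e > 0" "affine_on {inv f z - e..inv f z} f"
      using pl_homeo_left_germ[OF f] by blast
    then have "affine_on {z - (z - f (inv f z - e))..z} (inv f)"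
      using pl_homeo_affine_on_inv[OF f] f by fastforce
    moreover have "f (inv f z - e) < z" using f e(1) pl_homeo_less_iff[OF f, of _ "inv f z"] by simp
    ultimately show ?thesis by (intro exI[of _ "z - f (inv f z - e)"]) simp
  qed
  moreover have "strict_mono (inv f)"
    by (rule strict_mono_inv[OF pl_homeo_strict_mono[OF f] pl_homeo_surj[OF f]]) (simp add: f)
  moreover have "surj (inv f)"
    by (rule surjI[of _ f]) (simp add: f)
  moreover have "inv f x = x" if "x \<notin> {0..1}" for x
    using pl_homeo_inv_f[OF f, of x] pl_homeo_outside[OF f that] by simp
  ultimately show ?thesis unfolding pl_homeo_def by blast
qed

lemma pl_homeo_id: "pl_homeo id"
proof -
  have aff: "affine_on S id" for S
    unfolding affine_on_def by (intro exI[of _ 1] exI[of _ 0]) simp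
  have "\<exists>e>0. affine_on {x..x+e} id" "\<exists>e>0. affine_on {x-e..x} id" for x :: real
    using aff zero_less_one by blast+
  then show ?thesis by (simp add: pl_homeo_def strict_mono_def)
qed

lemma pl_homeo_funpow: "pl_homeo w \<Longrightarrow> pl_homeo (w ^^ n)"
  by (induction n) (simp_all add: pl_homeo_id pl_homeo_comp)

lemma finite_gap_right:
  fixes T :: "real set"
  assumes "finite T" "s \<in> T" "t \<in> T" "s \<le> x" "x < t"
  shows "\<exists>u\<in>T. \<exists>v\<in>T. u \<le> x \<and> x < v \<and> {u<..<v} \<inter> T = {}"
proof -
  define u where "u = Max {r\<in>T. r \<le> x}"
  define v where "v = Min {r\<in>T. x < r}"
  have fin: "finite {r\<in>T. r \<le> x}" "finite {r\<in>T. x < r}" using assms(1) by auto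
  have ne: "{r\<in>T. r \<le> x} \<noteq> {}" "{r\<in>T. x < r} \<noteq> {}" using assms by auto
  have "u \<in> T" "u \<le> x" using Max_in[OF fin(1) ne(1)] by (auto simp: u_def)
  moreover have "v \<in> T" "x < v" using Min_in[OF fin(2) ne(2)] by (auto simp: v_def)
  moreover have "{u<..<v} \<inter> T = {}"
  proof (rule equals0I)
    fix r assume "r \<in> {u<..<v} \<inter> T"
    then have r: "r \<in> T" "u < r" "r < v" by auto
    show False
    proof (cases "r \<le> x")
      case True
      then have "r \<le> u" using r(1) Max_ge[OF fin(1)] unfolding u_def by simp
      then show ?thesis using r by simp
    next
      case False
      then have "v \<le> r" using r(1) Min_le[OF fin(2)] unfolding v_def by simp
      then show ?thesis using r by simp
    qed
  qed
  ultimately show ?thesis by blast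
qed

lemma finite_gap_left:
  fixes T :: "real set"
  assumes "finite T" "s \<in> T" "t \<in> T" "s < x" "x \<le> t"
  shows "\<exists>u\<in>T. \<exists>v\<in>T. u < x \<and> x \<le> v \<and> {u<..<v} \<inter> T = {}"
proof -
  define u where "u = Max {r\<in>T. r < x}"
  define v where "v = Min {r\<in>T. x \<le> r}"
  have fin: "finite {r\<in>T. r < x}" "finite {r\<in>T. x \<le> r}" using assms(1) by auto
  have ne: "{r\<in>T. r < x} \<noteq> {}" "{r\<in>T. x \<le> r} \<noteq> {}" using assms by auto
  have "u \<in> T" "u < x" using Max_in[OF fin(1) ne(1)] by (auto simp: u_def)
  moreover have "v \<in> T" "x \<le> v" using Min_in[OF fin(2) ne(2)] by (auto simp: v_def)
  moreover have "{u<..<v} \<inter> T = {}"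
  proof (rule equals0I)
    fix r assume "r \<in> {u<..<v} \<inter> T"
    then have r: "r \<in> T" "u < r" "r < v" by auto
    show False
    proof (cases "r < x")
      case True
      then have "r \<le> u" using r(1) Max_ge[OF fin(1)] unfolding u_def by simp
      then show ?thesis using r by simp
    next
      case False
      then have "v \<le> r" using r(1) Min_le[OF fin(2)] unfolding v_def by simp
      then show ?thesis using r by simp
    qed
  qed
  ultimately show ?thesis by blast
qed

context
  fixes f :: "real \<Rightarrow> real"
  assumes f: "PL0 f"
begin

lemma PL0_image_unit: "f ` {0..1} = {0..1}"
  and PL0_strict_mono_on_unit: "strict_mono_on {0..1} f"
  and PL0_outside: "\<forall>x. x \<notin> {0..1} \<longrightarrow> f x = x"
  using f by (simp_all add: PL0_def bij_betw_def)

lemma PL0_fixes_outside_open: "x \<le> 0 \<or> 1 \<le> x \<Longrightarrow> f x = x"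
proof -
  have in_unit: "f y \<in> {0..1}" if "y \<in> {0..1}" for y
    using PL0_image_unit that by blast
  have le: "f y \<le> f z" if "y \<in> {0..1}" "z \<in> {0..1}" "y \<le> z" for y z
    using PL0_strict_mono_on_unit that by (metis order_le_less strict_mono_onD)
  have "0 \<in> f ` {0..1}" "1 \<in> f ` {0..1}" using PL0_image_unit by auto
  then obtain z0 z1 where z: "z0 \<in> {0..1}" "f z0 = 0" "z1 \<in> {0..1}" "f z1 = 1"
    by (metis imageE)
  have "f 0 \<le> 0" using le[of 0 z0] z(1,2) by simp
  moreover have "1 \<le> f 1" using le[of z1 1] z(3,4) by simp
  ultimately have "f 0 = 0" "f 1 = 1" using in_unit[of 0] in_unit[of 1] by simp_all
  moreover assume "x \<le> 0 \<or> 1 \<le> x"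
  ultimately show "f x = x" using PL0_outside by (cases "x = 0 \<or> x = 1") auto
qed

lemma PL0_strict_mono: "strict_mono f"
proof (rule strict_monoI)
  note img = PL0_image_unit and mono = PL0_strict_mono_on_unit and out = PL0_outside
  fix x y :: real assume xy: "x < y"
  consider "x \<in> {0..1}" "y \<in> {0..1}" | "x \<in> {0..1}" "1 < y" | "x < 0" | "1 < x"
    using xy by fastforce
  then show "f x < f y"
  proof cases
    case 1
    then show ?thesis using mono xy by (simp add: strict_mono_on_def)
  next
    case 2
    then have "f x \<le> 1" using img by auto
    moreover have "f y = y" using 2 out by simp
    ultimately show ?thesis using 2 by simp
  next
    case 3
    then have "f x = x" using out by simp
    moreover have "f y \<in> {0..1} \<or> f y = y" using img out by blast
    ultimately show ?thesis using 3 xy by auto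
  next
    case 4
    then show ?thesis using out xy by simp
  qed
qed

lemma PL0_surj: "surj f"
proof (rule surjI)
  show "f (if y \<in> {0..1} then inv_into {0..1} f y else y) = y" for y
    using PL0_image_unit PL0_outside by (auto intro: f_inv_into_f)
qed

lemma PL0_affine_near_fixed: "\<forall>y\<in>S. y \<le> 0 \<or> 1 \<le> y \<Longrightarrow> affine_on S f"
  unfolding affine_on_def using PL0_fixes_outside_open by (intro exI[of _ 1] exI[of _ 0]) simp

lemma PL0_breakpoints:
  "\<exists>T. finite T \<and> {0, 1} \<subseteq> T \<and>
    (\<forall>u\<in>T. \<forall>v\<in>T. u < v \<and> {u<..<v} \<inter> T = {} \<longrightarrow> affine_on {u..v} f)"
  using f unfolding PL0_def affine_on_def by blast

lemma PL0_right_germ: "\<exists>e>0. affine_on {x..x+e} f"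
proof (cases "0 \<le> x \<and> x < 1")
  case True
  obtain T where T: "finite T" "{0, 1} \<subseteq> T"
    and aff: "\<forall>u\<in>T. \<forall>v\<in>T. u < v \<and> {u<..<v} \<inter> T = {} \<longrightarrow> affine_on {u..v} f"
    using PL0_breakpoints by blast
  obtain u v where uv: "u \<in> T" "v \<in> T" "u \<le> x" "x < v" "{u<..<v} \<inter> T = {}"
    using finite_gap_right[OF T(1), of 0 1 x] T(2) True by auto
  then have "affine_on {u..v} f" by (intro aff[rule_format]) auto
  then have "affine_on {x..x + (v - x)} f" by (rule affine_on_subset) (use uv in auto)
  then show ?thesis using uv(4) by (intro exI[of _ "v - x"]) simp
next
  case False
  then have "affine_on {x..x + (if x < 0 then -x else 1)} f" by (intro PL0_affine_near_fixed) auto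
  then show ?thesis using False by (intro exI[of _ "if x < 0 then -x else 1"]) simp
qed

lemma PL0_left_germ: "\<exists>e>0. affine_on {x-e..x} f"
proof (cases "0 < x \<and> x \<le> 1")
  case True
  obtain T where T: "finite T" "{0, 1} \<subseteq> T"
    and aff: "\<forall>u\<in>T. \<forall>v\<in>T. u < v \<and> {u<..<v} \<inter> T = {} \<longrightarrow> affine_on {u..v} f"
    using PL0_breakpoints by blast
  obtain u v where uv: "u \<in> T" "v \<in> T" "u < x" "x \<le> v" "{u<..<v} \<inter> T = {}"
    using finite_gap_left[OF T(1), of 0 1 x] T(2) True by auto
  then have "affine_on {u..v} f" by (intro aff[rule_format]) auto
  then have "affine_on {x - (x - u)..x} f" by (rule affine_on_subset) (use uv in auto)
  then show ?thesis using uv(3) by (intro exI[of _ "x - u"]) simp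
next
  case False
  then have "affine_on {x - (if x \<le> 0 then 1 else x - 1)..x} f" by (intro PL0_affine_near_fixed) auto
  then show ?thesis using False by (intro exI[of _ "if x \<le> 0 then 1 else x - 1"]) auto
qed

lemma PL0_imp_pl_homeo: "pl_homeo f"
proof -
  show ?thesis
    using PL0_outside PL0_strict_mono PL0_surj PL0_right_germ PL0_left_germ unfolding pl_homeo_def by blast
qed

end

section \<open>Orbitals\<close>

definition orbital_ends :: "(real \<Rightarrow> real) \<Rightarrow> real \<Rightarrow> real \<Rightarrow> bool" where
  "orbital_ends u p q \<longleftrightarrow> p < q \<and> u p = p \<and> u q = q \<and> (\<forall>x\<in>{p<..<q}. u x \<noteq> x)"

lemma orbital_endsD:
  assumes "orbital_ends u p q"
  shows "p < q" "u p = p" "u q = q" "p < x \<Longrightarrow> x < q \<Longrightarrow> u x \<noteq> x"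
  using assms by (auto simp: orbital_ends_def)

lemma orbital_imp_orbital_ends:
  assumes pq: "p < q" and "orbital u {p<..<q}"
  shows "orbital_ends u p q"
proof -
  have C: "{p<..<q} \<in> components (supp u)" using assms(2) by (simp add: orbital_def)
  then have sub: "{p<..<q} \<subseteq> supp u" by (rule in_components_subset)
  have max: "D = {p<..<q}" if "{p<..<q} \<subseteq> D" "D \<subseteq> supp u" "connected D" for D
  proof -
    have "D \<noteq> {}" using that(1) pq by auto
    then show ?thesis using C that unfolding in_components_maximal by blast
  qed
  have "u p = p"
  proof (rule ccontr)
    assume "u p \<noteq> p"
    then have "{p..<q} \<subseteq> supp u" using sub by (auto simp: supp_def less_eq_real_def)
    then have "{p..<q} = {p<..<q}" by (intro max) auto
    moreover have "p \<in> {p..<q}" using pq by simp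
    ultimately show False by simp
  qed
  moreover have "u q = q"
  proof (rule ccontr)
    assume "u q \<noteq> q"
    then have "{p<..q} \<subseteq> supp u" using sub by (auto simp: supp_def less_eq_real_def)
    then have "{p<..q} = {p<..<q}" by (intro max) auto
    moreover have "q \<in> {p<..q}" using pq by simp
    ultimately show False by simp
  qed
  ultimately show ?thesis using sub pq by (auto simp: orbital_ends_def supp_def)
qed

lemma orbital_ends_imp_orbital:
  assumes o: "orbital_ends u p q"
  shows "orbital u {p<..<q}"
proof -
  have pq: "p < q" using o by (simp add: orbital_ends_def)
  have sub: "{p<..<q} \<subseteq> supp u" using o by (auto simp: orbital_ends_def supp_def)
  have "D \<subseteq> {p<..<q}" if D: "{p<..<q} \<subseteq> D" "D \<subseteq> supp u" "connected D" for D
  proof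
    fix x assume x: "x \<in> D"
    define m where "m = (p + q) / 2"
    have m: "m \<in> D" "p < m" "m < q" using D(1) pq by (auto simp: m_def)
    have "q \<notin> D" "p \<notin> D" using D(2) o by (auto simp: orbital_ends_def supp_def)
    then have "q \<notin> {m..x}" "p \<notin> {x..m}"
      using connected_contains_Icc[OF D(3) m(1) x] connected_contains_Icc[OF D(3) x m(1)] by auto
    then show "x \<in> {p<..<q}" using m by auto
  qed
  then show ?thesis
    unfolding orbital_def in_components_maximal using sub pq by auto
qed

lemma orbital_iff_orbital_ends: "p < q \<Longrightarrow> orbital u {p<..<q} \<longleftrightarrow> orbital_ends u p q"
  using orbital_imp_orbital_ends orbital_ends_imp_orbital by blast

lemma orbital_ends_unique:
  assumes "orbital_ends u p q" "orbital_ends u p' q'" "x \<in> {p<..<q}" "x \<in> {p'<..<q'}"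
  shows "p = p' \<and> q = q'"
  using assms unfolding orbital_ends_def
  by (metis greaterThanLessThan_iff linorder_neqE_linordered_idom order.strict_trans)

lemma orbital_ends_maps_into:
  assumes "strict_mono u" "orbital_ends u p q" "p < x" "x < q"
  shows "p < u x \<and> u x < q"
  using assms by (metis orbital_endsD(2,3) strict_mono_less)

lemma orbital_ends_conj:
  assumes f: "pl_homeo f" and o: "orbital_ends u p q"
  shows "orbital_ends (\<lambda>x. f (u (inv f x))) (f p) (f q)"
proof -
  have "f (u (inv f y)) \<noteq> y" if "f p < y" "y < f q" for y
  proof -
    have "p < inv f y" "inv f y < q"
      using that pl_homeo_less_iff[OF f, of p "inv f y"] pl_homeo_less_iff[OF f, of "inv f y" q] f
      by auto
    then have "u (inv f y) \<noteq> inv f y" using o by (simp add: orbital_ends_def)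
    then show ?thesis by (metis f pl_homeo_f_inv pl_homeo_inv_f)
  qed
  then show ?thesis using o f by (auto simp: orbital_ends_def)
qed

lemma orbital_ends_inv:
  assumes "pl_homeo u" "orbital_ends u p q"
  shows "orbital_ends (inv u) p q"
  using assms unfolding orbital_ends_def by (metis pl_homeo_f_inv pl_homeo_inv_f)

lemma orbital_ends_sign:
  assumes cont: "continuous_on {p..q} u" and o: "orbital_ends u p q"
  shows "(\<forall>x\<in>{p<..<q}. u x < x) \<or> (\<forall>x\<in>{p<..<q}. x < u x)"
proof (rule ccontr)
  assume "\<not> ?thesis"
  then obtain x y where xy: "x \<in> {p<..<q}" "y \<in> {p<..<q}" "x \<le> u x" "u y \<le> y" by force
  have c: "continuous_on {min x y..max x y} (\<lambda>t. u t - t)"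
    by (intro continuous_intros continuous_on_subset[OF cont]) (use xy in auto)
  obtain z where z: "min x y \<le> z" "z \<le> max x y" "u z - z = 0"
  proof (cases "x \<le> y")
    case True
    then show ?thesis using IVT2'[of "\<lambda>t. u t - t" y 0 x] c xy that by auto
  next
    case False
    then show ?thesis using IVT'[of "\<lambda>t. u t - t" y 0 x] c xy that by auto
  qed
  then have "z \<in> {p<..<q}" using xy by auto
  then show False using z o by (auto simp: orbital_ends_def)
qed

lemma orbital_ends_exists:
  assumes u: "pl_homeo u" and ux: "u x \<noteq> x"
  shows "\<exists>p q. orbital_ends u p q \<and> p < x \<and> x < q"
proof -
  have x01: "0 < x" "x < 1" using ux pl_homeo_fixes_outside_open[OF u, of x] by linarith+
  have cl: "closed {y. u y = y}"
    by (intro closed_Collect_eq pl_homeo_continuous_on[OF u] continuous_on_id)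
  define A where "A = {y. u y = y} \<inter> {..x}"
  define B where "B = {y. u y = y} \<inter> {x..}"
  have A: "A \<noteq> {}" "bdd_above A" "closed A"
    using cl pl_homeo_fixes_outside_open[OF u, of 0] x01 by (auto simp: A_def intro: closed_Int)
  have B: "B \<noteq> {}" "bdd_below B" "closed B"
    using cl pl_homeo_fixes_outside_open[OF u, of 1] x01 by (auto simp: B_def intro: closed_Int)
  define p where "p = Sup A"
  define q where "q = Inf B"
  have pA: "p \<in> A" using closed_contains_Sup[OF A] by (simp add: p_def)
  have qB: "q \<in> B" using closed_contains_Inf[OF B] by (simp add: q_def)
  have px: "p < x" using pA ux by (auto simp: A_def less_le)
  have qx: "x < q" using qB ux by (auto simp: B_def less_le)
  have "u y \<noteq> y" if "p < y" "y < q" for y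
  proof
    assume "u y = y"
    then have "y \<in> A \<or> y \<in> B" by (auto simp: A_def B_def)
    then show False
      using cSup_upper[OF _ A(2), of y] cInf_lower[OF _ B(2), of y] that
      unfolding p_def q_def by auto
  qed
  then have "orbital_ends u p q" using pA qB px qx by (auto simp: orbital_ends_def A_def B_def)
  then show ?thesis using px qx by blast
qed

lemma orbital_ends_in_family:
  assumes family: "\<forall>B. orbital u B \<and> B \<inter> A \<noteq> {} \<longrightarrow> (\<exists>i\<in>I. B = {b i<..<d i})"
    and o: "orbital_ends u p q" and meets: "{p<..<q} \<inter> A \<noteq> {}"
  shows "\<exists>i\<in>I. p = b i \<and> q = d i"
proof -
  have pq: "p < q" using orbital_endsD(1)[OF o] .
  then have "orbital u {p<..<q}" using orbital_iff_orbital_ends o by blast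
  then obtain i where "i \<in> I" "{p<..<q} = {b i<..<d i}" using family meets by blast
  then show ?thesis using pq greaterThanLessThan_eq_iff by auto
qed

section \<open>Commuting PL homeomorphisms\<close>

lemma commute_inv:
  assumes "bij v" and comm: "\<forall>x. u (v x) = v (u x)"
  shows "\<forall>x. u (inv v x) = inv v (u x)"
proof
  fix x
  have "v (u (inv v x)) = u x"
    using comm bij_inv_eq_iff[OF assms(1)] by metis
  then show "u (inv v x) = inv v (u x)"
    using bij_inv_eq_iff[OF assms(1)] by metis
qed

lemma commute_funpow: "\<forall>x. u (w x) = w (u x) \<Longrightarrow> u ((w ^^ n) x) = (w ^^ n) (u x)"
  by (induction n arbitrary: x) auto

context
  fixes u :: "real \<Rightarrow> real" and p q :: real
  assumes u: "pl_homeo u" and up: "u p = p" and dec: "\<forall>x\<in>{p<..<q}. u x < x"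
begin

lemma funpow_in_interval:
  assumes "p < y" "y < q"
  shows "p < (u ^^ n) y \<and> (u ^^ n) y < q"
proof (induction n)
  case 0
  then show ?case using assms by simp
next
  case (Suc n)
  then have "p < u ((u ^^ n) y)" using u up by (metis pl_homeo_less_iff)
  moreover have "u ((u ^^ n) y) < (u ^^ n) y" using Suc dec by auto
  ultimately show ?case using Suc by simp
qed

lemma funpow_tends_to_fixed_end:
  assumes y: "p < y" "y < q" and e: "e > 0"
  shows "\<exists>n. (u ^^ n) y < p + e"
proof -
  define s where "s n = (u ^^ n) y" for n
  have s_in: "p < s n \<and> s n < q" for n using funpow_in_interval[OF y] by (simp add: s_def)
  have "decseq s" using s_in dec by (intro decseq_SucI) (simp add: s_def less_imp_le)
  moreover have bdd: "bdd_below (range s)"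
    unfolding bdd_below_def using s_in by (metis less_imp_le rangeE)
  ultimately have lim: "s \<longlonglongrightarrow> (INF i. s i)" by (simp add: LIMSEQ_decseq_INF)
  define L where "L = (INF i. s i)"
  have "p \<le> L" unfolding L_def using s_in by (intro cINF_greatest) (auto intro: less_imp_le)
  moreover have "L < q" using cINF_lower[OF bdd, of 0] s_in[of 0] by (simp add: L_def)
  moreover have "u L = L"
  proof -
    have "(\<lambda>n. u (s n)) \<longlonglongrightarrow> u L"
      using lim pl_homeo_isCont[OF u] by (simp add: L_def isCont_tendsto_compose)
    moreover have "(\<lambda>n. u (s n)) \<longlonglongrightarrow> L"
      using LIMSEQ_Suc[OF lim] by (simp add: s_def L_def)
    ultimately show ?thesis using LIMSEQ_unique by blast
  qed
  ultimately have "L = p" using dec by force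
  then have "eventually (\<lambda>n. s n < p + e) sequentially"
    using order_tendstoD(2)[OF lim] e by (simp add: L_def)
  then show ?thesis by (auto simp: s_def eventually_sequentially)
qed

lemma commute_funpow_on:
  assumes comm: "\<forall>x\<in>{p<..<q}. v (u x) = u (v x)" and y: "p < y" "y < q"
  shows "v ((u ^^ n) y) = (u ^^ n) (v y)"
proof (induction n)
  case (Suc n)
  have "v (u ((u ^^ n) y)) = u (v ((u ^^ n) y))"
    using comm funpow_in_interval[OF y, of n] by auto
  then show ?case using Suc by simp
qed simp

text \<open>The orbit of a fixed point of \<open>v\<close> accumulates at \<open>p\<close>, where \<open>v\<close> is affine;
  so \<open>v\<close> is the identity near \<open>p\<close>, and hence everywhere by conjugating back with powers of \<open>u\<close>.\<close>

lemma commuting_affine_at_end_is_id: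
  assumes comm: "\<forall>x\<in>{p<..<q}. v (u x) = u (v x)" and vp: "v p = p"
    and e: "e > 0" "affine_on {p..p+e} v"
    and x0: "p < x0" "x0 < q" "v x0 = x0"
  shows "\<forall>x\<in>{p<..<q}. v x = x"
proof -
  obtain n where n: "(u ^^ n) x0 < p + e" using funpow_tends_to_fixed_end[OF x0(1,2) e(1)] by blast
  define z where "z = (u ^^ n) x0"
  have "p < z" "z < p + e" using funpow_in_interval[OF x0(1,2), of n] n by (auto simp: z_def)
  moreover have "v z = z" using commute_funpow_on[OF comm x0(1,2), of n] x0(3) by (simp add: z_def)
  ultimately have near: "\<forall>y\<in>{p..p+e}. v y = y"
    using affine_on_eq_id[OF e(2), of p z] vp e(1) by simp
  show ?thesis
  proof
    fix y assume y: "y \<in> {p<..<q}"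
    obtain n where n: "(u ^^ n) y < p + e" using funpow_tends_to_fixed_end[OF _ _ e(1)] y by auto
    have "p < (u ^^ n) y" using funpow_in_interval y by auto
    then have "(u ^^ n) (v y) = (u ^^ n) y"
      using near n commute_funpow_on[OF comm] y by (metis atLeastAtMost_iff greaterThanLessThan_iff less_imp_le)
    moreover have "inj (u ^^ n)" using pl_homeo_inj[OF pl_homeo_funpow[OF u]] .
    ultimately show "v y = y" by (meson injD)
  qed
qed

end

lemma commuting_on_orbital_is_id:
  assumes u: "pl_homeo u" and o: "orbital_ends u p q"
    and comm: "\<forall>x\<in>{p<..<q}. v (u x) = u (v x)" and vp: "v p = p"
    and e: "e > 0" "affine_on {p..p+e} v"
    and x0: "p < x0" "x0 < q" "v x0 = x0"
  shows "\<forall>x\<in>{p<..<q}. v x = x"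
proof (cases "\<forall>x\<in>{p<..<q}. u x < x")
  case True
  show ?thesis
    by (rule commuting_affine_at_end_is_id[OF u orbital_endsD(2)[OF o] True comm vp e x0])
next
  case False
  then have inc: "\<forall>x\<in>{p<..<q}. x < u x"
    using orbital_ends_sign[OF pl_homeo_continuous_on[OF u] o] by blast
  have u': "pl_homeo (inv u)" and o': "orbital_ends (inv u) p q"
    using pl_homeo_inv[OF u] orbital_ends_inv[OF u o] .
  have inv_in: "p < inv u x \<and> inv u x < q" if "x \<in> {p<..<q}" for x
    using orbital_ends_maps_into[OF pl_homeo_strict_mono[OF u'] o'] that by auto
  have "\<forall>x\<in>{p<..<q}. inv u x < x"
    using inv_in inc u by (metis greaterThanLessThan_iff pl_homeo_f_inv)
  moreover have "\<forall>x\<in>{p<..<q}. v (inv u x) = inv u (v x)"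
    using inv_in comm u by (metis greaterThanLessThan_iff pl_homeo_f_inv pl_homeo_inv_f)
  ultimately show ?thesis
    using commuting_affine_at_end_is_id[OF u' orbital_endsD(2)[OF o'] _ _ vp e x0] by blast
qed

lemma pl_homeo_fixes_increasing_seq:
  assumes u: "pl_homeo u" and P_Suc: "\<And>n. P n < P (Suc n)" and bdd: "bdd_above (range P)"
    and fixed: "\<And>n. u (P n) = P n"
  shows "\<exists>n. \<forall>y\<in>{P n..P (Suc n)}. u y = y"
proof -
  define L where "L = (SUP n. P n)"
  have PL: "P n \<le> L" for n unfolding L_def using bdd by (simp add: cSUP_upper)
  obtain e where e: "e > 0" "affine_on {L-e..L} u" using pl_homeo_left_germ[OF u] by blast
  have "L - e < L" using e(1) by simp
  then obtain n where n: "L - e < P n"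
    using less_cSUP_iff[OF _ bdd, of "L - e"] unfolding L_def by blast
  have "P n \<in> {L-e..L}" "P (Suc n) \<in> {L-e..L}" using n PL P_Suc[of n] by (auto intro: less_imp_le)
  then have "\<forall>y\<in>{L-e..L}. u y = y"
    using affine_on_eq_id[OF e(2)] fixed P_Suc[of n] by (metis less_irrefl)
  moreover have "{P n..P (Suc n)} \<subseteq> {L-e..L}" using n PL[of "Suc n"] by auto
  ultimately show ?thesis by (meson subsetD)
qed

text \<open>Otherwise the points \<open>w\<^sup>n p\<close> are increasing fixed points of \<open>u\<close>, interleaved with the
  non-fixed points \<open>w\<^sup>n ((p + q)/2)\<close>.\<close>

lemma commuting_not_push_orbital_start:
  assumes u: "pl_homeo u" and w: "pl_homeo w" and comm: "\<forall>x. u (w x) = w (u x)"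
    and o: "orbital_ends u p q"
  shows "w p \<le> p"
proof (rule ccontr)
  assume "\<not> w p \<le> p"
  then have wp: "p < w p" by simp
  have pq: "p < q" "u p = p" "u q = q" using orbital_endsD[OF o] by auto
  have wpq: "q \<le> w p"
  proof (rule ccontr)
    assume "\<not> q \<le> w p"
    then have "u (w p) \<noteq> w p" using orbital_endsD(4)[OF o wp] by simp
    then show False using comm pq(2) by metis
  qed
  define m where "m = (p + q) / 2"
  define P where "P n = (w ^^ n) p" for n
  define Z where "Z n = (w ^^ n) m" for n
  have m: "p < m" "m < q" using pq by (auto simp: m_def)
  then have "u m \<noteq> m" using orbital_endsD(4)[OF o] by blast
  have wn: "pl_homeo (w ^^ n)" for n by (rule pl_homeo_funpow[OF w])
  have uP: "u (P n) = P n" for n unfolding P_def using commute_funpow[OF comm] pq by simp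
  have uZ: "u (Z n) \<noteq> Z n" for n
  proof -
    have "u (Z n) = (w ^^ n) (u m)" unfolding Z_def by (rule commute_funpow[OF comm])
    then show ?thesis using \<open>u m \<noteq> m\<close> pl_homeo_eq_iff[OF wn[of n]] by (simp add: Z_def)
  qed
  have PZ: "P n < Z n" for n unfolding P_def Z_def using m pl_homeo_less_iff[OF wn] by blast
  have ZP: "Z n < P (Suc n)" for n
  proof -
    have "Z n < (w ^^ n) q" unfolding Z_def using m pl_homeo_less_iff[OF wn] by blast
    also have "\<dots> \<le> (w ^^ n) (w p)" using wpq pl_homeo_le_iff[OF wn] by blast
    also have "\<dots> = P (Suc n)" unfolding P_def funpow_Suc_right by simp
    finally show ?thesis .
  qed
  have "m \<le> 1" using \<open>u m \<noteq> m\<close> pl_homeo_fixes_outside_open[OF u, of m] by linarith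
  then have "P n \<le> 1" for n
    using m pl_homeo_le_iff[OF wn[of n], of p 1] pl_homeo_fixes_outside_open[OF wn[of n], of 1]
    by (simp add: P_def)
  then have bdd: "bdd_above (range P)" unfolding bdd_above_def by auto
  have P_Suc: "P n < P (Suc n)" for n using PZ ZP less_trans by blast
  obtain n where "\<forall>y\<in>{P n..P (Suc n)}. u y = y"
    using pl_homeo_fixes_increasing_seq[OF u P_Suc bdd uP] by blast
  then have "u (Z n) = Z n" using PZ[of n] ZP[of n] by (simp add: less_imp_le)
  then show False using uZ by blast
qed

lemma commuting_fixes_orbital_ends:
  assumes u: "pl_homeo u" and v: "pl_homeo v" and comm: "\<forall>x. u (v x) = v (u x)"
    and o: "orbital_ends u p q"
  shows "v p = p \<and> v q = q"
proof -
  have pq: "p < q" "u p = p" "u q = q" using orbital_endsD[OF o] by auto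
  have "v p \<le> p" using commuting_not_push_orbital_start[OF u v comm o] .
  moreover have "inv v p \<le> p"
    using commuting_not_push_orbital_start[OF u pl_homeo_inv[OF v]
        commute_inv[OF pl_homeo_bij[OF v] comm] o] .
  then have "p \<le> v p" using pl_homeo_le_iff[OF v, of "inv v p" p] v by simp
  ultimately have vp: "v p = p" by simp
  have "v q = q"
  proof (rule ccontr)
    assume ne: "v q \<noteq> q"
    have "p < v q" using vp pq pl_homeo_less_iff[OF v, of p q] by simp
    show False
    proof (cases "v q < q")
      case True
      then have "u (v q) \<noteq> v q" using orbital_endsD(4)[OF o \<open>p < v q\<close>] by simp
      moreover have "u (v q) = v q" using comm pq(3) by metis
      ultimately show False by simp
    next
      case False
      define y where "y = inv v q"
      have vy: "v y = q" using v by (simp add: y_def)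
      have "p < y" "y < q"
        using False ne vp pq vy pl_homeo_less_iff[OF v, of p y] pl_homeo_less_iff[OF v, of y q] by auto
      then have "u y \<noteq> y" using orbital_endsD(4)[OF o] by simp
      moreover have "v (u y) = v y" using comm[rule_format, of y] vy pq(3) by simp
      ultimately show False using pl_homeo_eq_iff[OF v] by blast
    qed
  qed
  with vp show ?thesis by blast
qed

lemma commuting_on_orbital_id_or_free:
  assumes u: "pl_homeo u" and v: "pl_homeo v" and comm: "\<forall>x. u (v x) = v (u x)"
    and o: "orbital_ends u p q"
  shows "(\<forall>x\<in>{p<..<q}. v x = x) \<or> (\<forall>x\<in>{p<..<q}. v x \<noteq> x)"
proof (cases "\<exists>x0\<in>{p<..<q}. v x0 = x0")
  case True
  then obtain x0 where x0: "p < x0" "x0 < q" "v x0 = x0" by auto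
  obtain e where e: "e > 0" "affine_on {p..p+e} v" using pl_homeo_right_germ[OF v] by blast
  have "v p = p" using commuting_fixes_orbital_ends[OF u v comm o] by blast
  moreover have "\<forall>x\<in>{p<..<q}. v (u x) = u (v x)" using comm by simp
  ultimately show ?thesis
    using commuting_on_orbital_is_id[OF u o _ _ e x0] by blast
qed blast

lemma affine_germ_at_fixed_point:
  assumes f: "pl_homeo f" and fb: "f b = b"
  shows "\<exists>e>0. \<exists>s>0. \<forall>y\<in>{b..b+e}. f y = b + s * (y - b)"
proof -
  obtain e m k where e: "e > 0" and mk: "\<forall>y\<in>{b..b+e}. f y = m * y + k"
    using pl_homeo_right_germ[OF f] unfolding affine_on_def by blast
  have "m * b + k < m * (b + e) + k"
    using mk e pl_homeo_less_iff[OF f, of b "b + e"] by simp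
  then have "m > 0" using e by (simp add: algebra_simps zero_less_mult_iff)
  moreover have "\<forall>y\<in>{b..b+e}. f y = b + m * (y - b)"
    using mk fb e by (simp add: algebra_simps)
  ultimately show ?thesis using e by blast
qed

text \<open>Near a common fixed point both maps are dilations centred there, and dilations commute.\<close>

lemma conj_right_germ_eq:
  assumes f: "pl_homeo f" and h: "pl_homeo h" and fb: "f b = b" and hb: "h b = b"
  shows "\<exists>\<delta>>0. \<forall>y\<in>{b..b+\<delta>}. f (h (inv f y)) = h y"
proof -
  obtain e1 s where e1: "e1 > 0" "s > 0" and fs: "\<forall>y\<in>{b..b+e1}. f y = b + s * (y - b)"
    using affine_germ_at_fixed_point[OF f fb] by blast
  obtain e2 t where e2: "e2 > 0" "t > 0" and ht: "\<forall>y\<in>{b..b+e2}. h y = b + t * (y - b)"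
    using affine_germ_at_fixed_point[OF h hb] by blast
  define \<delta> where "\<delta> = min (min (s * e1) (s * e2)) (min (s * e1 / t) e2)"
  have "f (h (inv f y)) = h y" if y: "y \<in> {b..b+\<delta>}" for y
  proof -
    define z where "z = b + (y - b) / s"
    have z: "z \<in> {b..b+e1}" "z \<in> {b..b+e2}"
      using y e1 by (auto simp: z_def \<delta>_def pos_divide_le_eq mult.commute)
    have "f z = y" using fs z(1) e1 by (simp add: z_def)
    then have "inv f y = z" using f by (metis pl_homeo_inv_f)
    moreover have hz: "h z = b + t * ((y - b) / s)" using ht z(2) by (simp add: z_def)
    moreover have "h z \<in> {b..b+e1}"
    proof -
      have "\<delta> \<le> s * e1 / t" by (simp add: \<delta>_def)
      then have "y - b \<le> s * e1 / t" using y by simp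
      then have "t * (y - b) \<le> s * e1" using e2 by (simp add: pos_le_divide_eq mult.commute)
      then show ?thesis using hz y e1 e2 by (auto simp: pos_divide_le_eq mult.commute)
    qed
    ultimately have "f (h (inv f y)) = b + t * (y - b)" using fs e1 by simp
    also have "\<dots> = h y"
    proof -
      have "\<delta> \<le> e2" by (simp add: \<delta>_def)
      then show ?thesis using ht y by simp
    qed
    finally show ?thesis .
  qed
  moreover have "\<delta> > 0" using e1 e2 by (simp add: \<delta>_def)
  ultimately show ?thesis by blast
qed

lemma commg_eq_id_imp_commute:
  assumes "surj a" "surj b" "commg a b = id"
  shows "\<forall>x. b (a x) = a (b x)"
proof
  fix x
  have "inv b (inv a (b (a x))) = x"
    using fun_cong[OF assms(3), of x] by (simp add: commg_def rmul_def rinv_def)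
  then have "inv a (b (a x)) = b x" using surj_f_inv_f[OF assms(2)] by metis
  then show "b (a x) = a (b x)" using surj_f_inv_f[OF assms(1)] by metis
qed

section \<open>The configuration of the lemma\<close>

locale commuting_conjugates =
  fixes f0 f1 :: "real \<Rightarrow> real"
  assumes pl_f0: "pl_homeo f0" and pl_f1: "pl_homeo f1"
    and comm1: "commg (conjg f1 f0) (rmul f0 (rinv f1)) = id"
    and comm2: "commg (rmul f0 (rinv f1)) (conjg f1 (rmul f0 f0)) = id"
begin

text \<open>With functions acting on the right, \<open>g = f\<^sub>0 f\<^sub>1\<^sup>-\<^sup>1\<close> and \<open>f1_conj \<phi> = f\<^sub>1\<^sup>\<phi>\<close>; the two
  conjugators \<open>\<phi> \<in> {f\<^sub>0, f\<^sub>0\<^sup>2}\<close> of the hypotheses are called shifts below.\<close>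

definition g :: "real \<Rightarrow> real" where
  "g = inv f1 \<circ> f0"

definition f1_conj :: "(real \<Rightarrow> real) \<Rightarrow> real \<Rightarrow> real" where
  "f1_conj \<phi> = (\<lambda>y. \<phi> (f1 (inv \<phi> y)))"

lemma g_fixed_iff: "g y = y \<longleftrightarrow> f0 y = f1 y"
  using pl_f1 by (auto simp: g_def) (metis pl_homeo_f_inv)

lemma pl_homeo_g: "pl_homeo g"
  unfolding g_def by (intro pl_homeo_comp pl_homeo_inv pl_f0 pl_f1)

lemma shift_f0: "f0 \<in> {f0, f0 \<circ> f0}" and shift_f0_f0: "f0 \<circ> f0 \<in> {f0, f0 \<circ> f0}"
  by simp_all

lemma pl_homeo_shift: "\<phi> \<in> {f0, f0 \<circ> f0} \<Longrightarrow> pl_homeo \<phi>"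
  using pl_f0 pl_homeo_comp by auto

lemma pl_homeo_f1_conj:
  assumes "pl_homeo \<phi>"
  shows "pl_homeo (f1_conj \<phi>)"
proof -
  have "f1_conj \<phi> = \<phi> \<circ> (f1 \<circ> inv \<phi>)" by (auto simp: f1_conj_def)
  then show ?thesis by (simp add: pl_homeo_comp pl_homeo_inv pl_f1 assms)
qed

lemma f1_conj_twice: "f1_conj (f0 \<circ> f0) y = f0 (f1_conj f0 (inv f0 y))"
  using o_inv_distrib[OF pl_homeo_bij[OF pl_f0] pl_homeo_bij[OF pl_f0]]
  by (simp add: f1_conj_def)

lemma f1_conj_commutes_g:
  assumes "\<phi> \<in> {f0, f0 \<circ> f0}"
  shows "\<forall>x. f1_conj \<phi> (g x) = g (f1_conj \<phi> x)"
proof -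
  have rmul_g: "rmul f0 (rinv f1) = g" by (simp add: rmul_def rinv_def g_def)
  have conjg_eq: "conjg f1 \<psi> = f1_conj \<psi>" for \<psi>
    by (auto simp: conjg_def rmul_def rinv_def f1_conj_def)
  have surj: "surj (f1_conj \<psi>)" if "pl_homeo \<psi>" for \<psi>
    using pl_homeo_surj[OF pl_homeo_f1_conj[OF that]] .
  show ?thesis
  proof (cases "\<phi> = f0")
    case True
    then show ?thesis
      using commg_eq_id_imp_commute[OF surj[OF pl_f0] pl_homeo_surj[OF pl_homeo_g]] comm1
      by (simp add: rmul_g conjg_eq)
  next
    case False
    then have "\<phi> = f0 \<circ> f0" using assms by simp
    moreover have "rmul f0 f0 = f0 \<circ> f0" by (simp add: rmul_def)
    ultimately show ?thesis
      using commg_eq_id_imp_commute[OF pl_homeo_surj[OF pl_homeo_g]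
          surj[OF pl_homeo_shift[OF assms]]] comm2
      by (simp add: rmul_g conjg_eq)
  qed
qed

lemma shifted_orbital_ends_agree:
  assumes "\<phi> \<in> {f0, f0 \<circ> f0}" and "orbital_ends f1 p q"
  shows "f0 (\<phi> p) = f1 (\<phi> p) \<and> f0 (\<phi> q) = f1 (\<phi> q)"
proof -
  have "orbital_ends (f1_conj \<phi>) (\<phi> p) (\<phi> q)"
    using orbital_ends_conj[OF pl_homeo_shift[OF assms(1)] assms(2)] by (simp add: f1_conj_def)
  then show ?thesis
    using commuting_fixes_orbital_ends[OF pl_homeo_f1_conj[OF pl_homeo_shift[OF assms(1)]]
        pl_homeo_g f1_conj_commutes_g[OF assms(1)]] g_fixed_iff
    by blast
qed

lemma shifted_orbital_dichotomy:
  assumes "\<phi> \<in> {f0, f0 \<circ> f0}" and "orbital_ends f1 p q"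
  shows "(\<forall>x\<in>{\<phi> p<..<\<phi> q}. f0 x = f1 x) \<or> orbital_ends g (\<phi> p) (\<phi> q)"
proof -
  have o: "orbital_ends (f1_conj \<phi>) (\<phi> p) (\<phi> q)"
    using orbital_ends_conj[OF pl_homeo_shift[OF assms(1)] assms(2)] by (simp add: f1_conj_def)
  have "(\<forall>x\<in>{\<phi> p<..<\<phi> q}. g x = x) \<or> (\<forall>x\<in>{\<phi> p<..<\<phi> q}. g x \<noteq> x)"
    by (rule commuting_on_orbital_id_or_free[OF pl_homeo_f1_conj[OF pl_homeo_shift[OF assms(1)]]
          pl_homeo_g f1_conj_commutes_g[OF assms(1)] o])
  moreover have "g (\<phi> p) = \<phi> p" "g (\<phi> q) = \<phi> q"
    using shifted_orbital_ends_agree[OF assms] g_fixed_iff by auto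
  ultimately show ?thesis
    using orbital_endsD(1)[OF o] g_fixed_iff by (auto simp: orbital_ends_def)
qed

end

locale up_bump_of_f0 = commuting_conjugates +
  fixes a c :: real
  assumes bump: "orbital_ends f0 a c" and up: "\<forall>x\<in>{a<..<c}. x < f0 x"
    and not_f1_orbital: "\<not> orbital_ends f1 a c"
begin

lemma shift_fixes_ends: "\<phi> \<in> {f0, f0 \<circ> f0} \<Longrightarrow> \<phi> a = a \<and> \<phi> c = c"
  using orbital_endsD(2,3)[OF bump] by auto

lemma shift_moves_up:
  assumes \<phi>: "\<phi> \<in> {f0, f0 \<circ> f0}" and x: "a < x" "x < c"
  shows "x < \<phi> x \<and> \<phi> x < c"
proof -
  have f0: "y < f0 y \<and> f0 y < c" if "a < y" "y < c" for y
    using up orbital_ends_maps_into[OF pl_homeo_strict_mono[OF pl_f0] bump that] that by auto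
  show ?thesis
  proof (cases "\<phi> = f0")
    case True
    then show ?thesis using f0 x by simp
  next
    case False
    then have "\<phi> = f0 \<circ> f0" using \<phi> by simp
    moreover have "x < f0 x" "f0 x < c" using f0 x by auto
    moreover have "f0 x < f0 (f0 x)" "f0 (f0 x) < c" using f0[of "f0 x"] \<open>x < f0 x\<close> \<open>f0 x < c\<close> x(1) by auto
    ultimately show ?thesis by simp
  qed
qed

lemma bump_in_unit_interval: "0 \<le> a \<and> c \<le> 1"
proof -
  have ac: "a < c" using orbital_endsD(1)[OF bump] .
  have moved: "0 < x \<and> x < 1" if "a < x" "x < c" for x
    using up that pl_homeo_fixes_outside_open[OF pl_f0, of x] by force
  have "0 \<le> a"
  proof (rule ccontr)
    assume "\<not> 0 \<le> a"
    then have "a < (a + min 0 c) / 2" "(a + min 0 c) / 2 < c" "(a + min 0 c) / 2 < 0"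
      using ac by (auto simp: min_def)
    then show False using moved by fastforce
  qed
  moreover have "c \<le> 1"
  proof (rule ccontr)
    assume "\<not> c \<le> 1"
    then have "a < (c + max 1 a) / 2" "(c + max 1 a) / 2 < c" "1 < (c + max 1 a) / 2"
      using ac by (auto simp: max_def)
    then show False using moved by fastforce
  qed
  ultimately show ?thesis by simp
qed

lemma straddling_orbital_shift_disagrees:
  assumes \<phi>: "\<phi> \<in> {f0, f0 \<circ> f0}" and o: "orbital_ends f1 p q" and pa: "p \<le> a" and aq: "a < q"
  shows "\<exists>x\<in>{\<phi> p<..<\<phi> q}. f0 x \<noteq> f1 x"
proof (rule ccontr)
  assume "\<not> ?thesis"
  then have eq: "\<forall>x\<in>{\<phi> p<..<\<phi> q}. f0 x = f1 x" by blast
  have pl: "pl_homeo \<phi>" using pl_homeo_shift[OF \<phi>] .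
  have \<phi>p: "\<phi> p \<le> a" using pa shift_fixes_ends[OF \<phi>] pl_homeo_le_iff[OF pl] by metis
  have ac: "a < c" using orbital_endsD(1)[OF bump] .
  show False
  proof (cases "q < c")
    case True
    then have "q < \<phi> q" using shift_moves_up[OF \<phi> aq] by blast
    then have "f0 q = f1 q" using eq \<phi>p aq by auto
    moreover have "f1 q = q" using orbital_endsD(3)[OF o] .
    ultimately show False using up[rule_format, of q] aq True by simp
  next
    case False
    then have \<phi>q: "c \<le> \<phi> q" using shift_fixes_ends[OF \<phi>] pl_homeo_le_iff[OF pl] by (metis not_less)
    have "f1 a = a"
    proof (cases "\<phi> p < a")
      case True
      then show ?thesis using eq \<phi>q ac orbital_endsD(2)[OF bump] by fastforce
    next
      case False
      then have "p = a" using \<phi>p shift_fixes_ends[OF \<phi>] pl_homeo_eq_iff[OF pl] by (metis antisym not_less)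
      then show ?thesis using orbital_endsD(2)[OF o] by simp
    qed
    moreover have "f1 c = c"
    proof (cases "c < \<phi> q")
      case True
      then show ?thesis using eq \<phi>p ac orbital_endsD(3)[OF bump] by fastforce
    next
      case False
      then have "q = c" using \<phi>q shift_fixes_ends[OF \<phi>] pl_homeo_eq_iff[OF pl] by (metis antisym not_less)
      then show ?thesis using orbital_endsD(3)[OF o] by simp
    qed
    moreover have "f1 x \<noteq> x" if "a < x" "x < c" for x
      using eq[rule_format, of x] up[rule_format, of x] that \<phi>p \<phi>q by simp
    ultimately show False using not_f1_orbital ac by (simp add: orbital_ends_def)
  qed
qed

text \<open>Both shifted images of \<open>(p, q)\<close> are orbitals of \<open>g\<close> containing the points just right of
  \<open>a\<close>, so they coincide.\<close>

lemma straddling_orbital_ends_fixed: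
  assumes o: "orbital_ends f1 p q" and pa: "p \<le> a" and aq: "a < q"
  shows "f0 p = p \<and> f0 q = q \<and> orbital_ends g p q"
proof -
  have og: "orbital_ends g (\<phi> p) (\<phi> q)" if "\<phi> \<in> {f0, f0 \<circ> f0}" for \<phi>
    using shifted_orbital_dichotomy[OF that o] straddling_orbital_shift_disagrees[OF that o pa aq]
    by blast
  define t where "t = (a + min q c) / 2"
  have ac: "a < c" using orbital_endsD(1)[OF bump] .
  have t: "t \<in> {\<phi> p<..<\<phi> q}" if \<phi>: "\<phi> \<in> {f0, f0 \<circ> f0}" for \<phi>
  proof -
    have pl: "pl_homeo \<phi>" using pl_homeo_shift[OF \<phi>] .
    have "\<phi> p \<le> a" using pa shift_fixes_ends[OF \<phi>] pl_homeo_le_iff[OF pl] by metis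
    moreover have "min q c \<le> \<phi> q"
    proof (cases "q < c")
      case True
      then show ?thesis using shift_moves_up[OF \<phi> aq] by auto
    next
      case False
      then show ?thesis using shift_fixes_ends[OF \<phi>] pl_homeo_le_iff[OF pl, of c q] by auto
    qed
    ultimately show ?thesis using aq ac by (auto simp: t_def)
  qed
  have "orbital_ends g (f0 p) (f0 q)" "orbital_ends g (f0 (f0 p)) (f0 (f0 q))"
    using og[of f0] og[of "f0 \<circ> f0"] by auto
  moreover have "t \<in> {f0 p<..<f0 q}" "t \<in> {f0 (f0 p)<..<f0 (f0 q)}"
    using t[of f0] t[of "f0 \<circ> f0"] by auto
  ultimately have "f0 p = f0 (f0 p) \<and> f0 q = f0 (f0 q)"
    by (rule orbital_ends_unique)
  then have "f0 p = p" "f0 q = q" using pl_homeo_eq_iff[OF pl_f0] by metis+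
  moreover have "orbital_ends g (f0 p) (f0 q)" using og by blast
  ultimately show ?thesis by simp
qed

text \<open>Both conjugates fix \<open>p\<close> and agree just to the right of it, where they are dilations centred
  at \<open>p\<close>; so the quotient of the two, which commutes with \<open>g\<close>, has a fixed point in the orbital
  \<open>(p, q)\<close> of \<open>g\<close>.\<close>

lemma straddling_conjugates_agree:
  assumes o: "orbital_ends f1 p q" and pa: "p \<le> a" and aq: "a < q"
  shows "\<forall>y\<in>{p<..<q}. f1_conj f0 y = f1_conj (f0 \<circ> f0) y"
proof -
  have f0p: "f0 p = p" and og: "orbital_ends g p q"
    using straddling_orbital_ends_fixed[OF assms] by auto
  define h1 h2 where "h1 = f1_conj f0" and "h2 = f1_conj (f0 \<circ> f0)"
  have pl_h: "pl_homeo h1" "pl_homeo h2"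
    unfolding h1_def h2_def using pl_homeo_f1_conj pl_homeo_shift by auto
  have "h1 p = p"
    using f0p orbital_endsD(2)[OF o] pl_f0 by (simp add: h1_def f1_conj_def) (metis pl_homeo_inv_f)
  then obtain \<delta> where \<delta>: "\<delta> > 0" "\<forall>y\<in>{p..p+\<delta>}. h2 y = h1 y"
    using conj_right_germ_eq[OF pl_f0 pl_h(1) f0p] by (auto simp: h1_def h2_def f1_conj_twice)
  have c1: "\<forall>x. h1 (g x) = g (h1 x)" and c2: "\<forall>x. g (h2 x) = h2 (g x)"
    using f1_conj_commutes_g[OF shift_f0] f1_conj_commutes_g[OF shift_f0_f0]
    by (simp_all add: h1_def h2_def)
  define v where "v = inv h2 \<circ> h1"
  have pl_v: "pl_homeo v" unfolding v_def by (intro pl_homeo_comp pl_homeo_inv pl_h)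
  have "\<forall>x. g (v x) = v (g x)"
    using commute_inv[OF pl_homeo_bij[OF pl_h(2)] c2] c1 by (simp add: v_def)
  moreover define \<mu> where "\<mu> = min \<delta> (q - p)"
  have "0 < \<mu>" "\<mu> \<le> q - p" "\<mu> \<le> \<delta>"
    using \<delta>(1) orbital_endsD(1)[OF o] by (auto simp: \<mu>_def)
  then have x0: "p < p + \<mu>/2" "p + \<mu>/2 < q" "p + \<mu>/2 \<in> {p..p+\<delta>}" by auto
  then have "h1 (p + \<mu>/2) = h2 (p + \<mu>/2)" using \<delta>(2) by simp
  then have "v (p + \<mu>/2) = p + \<mu>/2" using pl_homeo_inv_f[OF pl_h(2)] by (simp add: v_def)
  ultimately have v_id: "\<forall>x\<in>{p<..<q}. v x = x"
    using commuting_on_orbital_id_or_free[OF pl_homeo_g pl_v _ og] x0 by force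
  show ?thesis
  proof
    fix y assume "y \<in> {p<..<q}"
    then have "inv h2 (h1 y) = y" using v_id by (simp add: v_def)
    then have "h1 y = h2 y" using pl_homeo_f_inv[OF pl_h(2)] by metis
    then show "f1_conj f0 y = f1_conj (f0 \<circ> f0) y" by (simp add: h1_def h2_def)
  qed
qed

lemma straddling_orbital_commute:
  assumes o: "orbital_ends f1 p q" and pa: "p \<le> a" and aq: "a < q"
  shows "\<forall>x\<in>{p<..<q}. f0 (f1 x) = f1 (f0 x)"
proof
  have f0p: "f0 p = p" and f0q: "f0 q = q"
    using straddling_orbital_ends_fixed[OF assms] by auto
  have inside: "p < f0 y \<and> f0 y < q" if "p < y" "y < q" for y
    using that f0p f0q pl_homeo_less_iff[OF pl_f0] by metis
  fix x assume "x \<in> {p<..<q}"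
  then have "p < f0 (f0 x)" "f0 (f0 x) < q" using inside by auto
  then have "f1_conj f0 (f0 (f0 x)) = f1_conj (f0 \<circ> f0) (f0 (f0 x))"
    using straddling_conjugates_agree[OF assms] by simp
  then have "f0 (f1 (f0 x)) = f0 (f0 (f1 x))"
    using pl_f0 unfolding f1_conj_twice by (simp add: f1_conj_def)
  then show "f0 (f1 x) = f1 (f0 x)" using pl_f0 by simp
qed

lemma f1_orbital_start_gt:
  assumes o: "orbital_ends f1 p q" and aq: "a < q"
  shows "a < p"
proof (rule ccontr)
  assume "\<not> a < p"
  then have pa: "p \<le> a" by simp
  have f0p: "f0 p = p" and f0q: "f0 q = q"
    using straddling_orbital_ends_fixed[OF o pa aq] by auto
  have ac: "a < c" using orbital_endsD(1)[OF bump] .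
  have cq: "c \<le> q" using f0q up aq by (metis greaterThanLessThan_iff less_irrefl not_less)
  obtain z where z: "p < z" "z < q" "f0 z = z"
  proof (cases "p < a")
    case True
    then show ?thesis using that[of a] ac cq orbital_endsD(2)[OF bump] by simp
  next
    case False
    then have "c < q" using pa cq not_f1_orbital o by (metis antisym order.order_iff_strict)
    then show ?thesis using that[of c] pa ac orbital_endsD(3)[OF bump] by simp
  qed
  obtain e where "e > 0" "affine_on {p..p+e} f0" using pl_homeo_right_germ[OF pl_f0] by blast
  then have "\<forall>x\<in>{p<..<q}. f0 x = x"
    using commuting_on_orbital_is_id[OF pl_f1 o straddling_orbital_commute[OF o pa aq] f0p _ _ z]
    by blast
  moreover have "(a + c) / 2 \<in> {p<..<q}" "(a + c) / 2 \<in> {a<..<c}" using pa cq ac by auto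
  ultimately show False using up[rule_format, of "(a + c) / 2"] by simp
qed

lemma f1_orbital_end_le:
  assumes o: "orbital_ends f1 p q" and pc: "p < c"
  shows "q \<le> c"
proof (rule ccontr)
  assume "\<not> q \<le> c"
  then have cq: "c < q" by simp
  have ac: "a < c" using orbital_endsD(1)[OF bump] .
  have ap: "a < p" using f1_orbital_start_gt[OF o] ac cq by simp
  have "f1 c \<noteq> c" using orbital_endsD(4)[OF o pc cq] .
  then have neq: "f0 c \<noteq> f1 c" using orbital_endsD(3)[OF bump] by simp
  have og: "orbital_ends g (\<phi> p) (\<phi> q)" and c_in: "c \<in> {\<phi> p<..<\<phi> q}"
    if \<phi>: "\<phi> \<in> {f0, f0 \<circ> f0}" for \<phi>
  proof -
    have "\<phi> p < c" using shift_moves_up[OF \<phi> ap pc] by simp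
    moreover have "c < \<phi> q"
      using cq shift_fixes_ends[OF \<phi>] pl_homeo_less_iff[OF pl_homeo_shift[OF \<phi>], of c q] by simp
    ultimately show "c \<in> {\<phi> p<..<\<phi> q}" by simp
    then show "orbital_ends g (\<phi> p) (\<phi> q)" using shifted_orbital_dichotomy[OF \<phi> o] neq by blast
  qed
  have "orbital_ends g (f0 p) (f0 q)" "orbital_ends g (f0 (f0 p)) (f0 (f0 q))"
    using og[of f0] og[of "f0 \<circ> f0"] by auto
  moreover have "c \<in> {f0 p<..<f0 q}" "c \<in> {f0 (f0 p)<..<f0 (f0 q)}"
    using c_in[of f0] c_in[of "f0 \<circ> f0"] by auto
  ultimately have "f0 p = f0 (f0 p)"
    using orbital_ends_unique by blast
  then have "f0 p = p" using pl_homeo_eq_iff[OF pl_f0] by metis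
  then show False using up ap pc by force
qed

lemma f1_orbital_inside_short:
  assumes o: "orbital_ends f1 p q" and ap: "a < p" and qc: "q < c"
  shows "q \<le> f0 p"
proof (rule ccontr)
  assume "\<not> q \<le> f0 p"
  then have lt: "f0 p < q" by simp
  have pq: "p < q" using orbital_endsD(1)[OF o] .
  have "g (f0 (f0 p)) = f0 (f0 p)"
    using shifted_orbital_ends_agree[OF shift_f0_f0 o] g_fixed_iff by simp
  moreover have "f0 p < f0 (f0 p)" "f0 (f0 p) < f0 q"
    using shift_moves_up[of f0 p] ap pq qc lt pl_homeo_less_iff[OF pl_f0] by auto
  ultimately have "\<not> orbital_ends g (f0 p) (f0 q)"
    using orbital_endsD(4)[of g "f0 p" "f0 q" "f0 (f0 p)"] by blast
  then have "\<forall>x\<in>{f0 p<..<f0 q}. f0 x = f1 x" using shifted_orbital_dichotomy[OF shift_f0 o] by blast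
  moreover have "q < f0 q" using shift_moves_up[of f0 q] ap pq qc by auto
  then have "q \<in> {f0 p<..<f0 q}" using lt by simp
  ultimately have "f0 q = f1 q" by blast
  then show False using orbital_endsD(3)[OF o] \<open>q < f0 q\<close> by simp
qed

lemma f0_eq_f1_beyond_orbital:
  assumes o: "orbital_ends f1 p c" and ap: "a < p"
  shows "\<forall>x\<in>{f0 p..c}. f0 x = f1 x"
proof -
  have pc: "p < c" using orbital_endsD(1)[OF o] .
  have f0c: "f0 c = c" using orbital_endsD(3)[OF bump] .
  have "g (f0 (f0 p)) = f0 (f0 p)"
    using shifted_orbital_ends_agree[OF shift_f0_f0 o] g_fixed_iff by simp
  moreover have "p < f0 p" "f0 p < c" using shift_moves_up[of f0 p] ap pc by auto
  moreover have "f0 p < f0 (f0 p)" "f0 (f0 p) < f0 c"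
    using shift_moves_up[of f0 "f0 p"] ap \<open>p < f0 p\<close> \<open>f0 p < c\<close> f0c by auto
  ultimately have "\<not> orbital_ends g (f0 p) (f0 c)"
    using orbital_endsD(4)[of g "f0 p" "f0 c" "f0 (f0 p)"] by blast
  then have inner: "\<forall>x\<in>{f0 p<..<f0 c}. f0 x = f1 x"
    using shifted_orbital_dichotomy[OF shift_f0 o] by blast
  have left: "f0 (f0 p) = f1 (f0 p)"
    using shifted_orbital_ends_agree[OF shift_f0 o] by simp
  have right: "f0 c = f1 c" using f0c orbital_endsD(3)[OF o] by simp
  show ?thesis
  proof
    fix x assume "x \<in> {f0 p..c}"
    then consider "x = f0 p" | "x \<in> {f0 p<..<f0 c}" | "x = c" using f0c by fastforce
    then show "f0 x = f1 x" using inner left right by cases blast+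
  qed
qed

end

locale listed_f1_orbitals = up_bump_of_f0 +
  fixes n :: nat and b d :: "nat \<Rightarrow> real"
  assumes n: "1 \<le> n"
    and listed: "\<And>i. i \<in> {1..n} \<Longrightarrow> orbital_ends f1 (b i) (d i) \<and> {b i<..<d i} \<inter> {a<..<c} \<noteq> {}"
    and ordered: "\<And>i j. i \<in> {1..n} \<Longrightarrow> j \<in> {1..n} \<Longrightarrow> i < j \<Longrightarrow> d i \<le> b j"
    and complete: "\<And>p q. orbital_ends f1 p q \<Longrightarrow> {p<..<q} \<inter> {a<..<c} \<noteq> {} \<Longrightarrow>
      \<exists>i\<in>{1..n}. p = b i \<and> q = d i"
begin

lemma first_last_listed: "1 \<in> {1..n}" "n \<in> {1..n}"
  using n by auto

lemma listed_bounds: "i \<in> {1..n} \<Longrightarrow> b i < d i \<and> b i < c \<and> a < d i"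
  using listed[of i] orbital_endsD(1) by fastforce

lemma first_start_le: "i \<in> {1..n} \<Longrightarrow> b 1 \<le> b i"
  using ordered[of 1 i] listed_bounds[of 1] first_last_listed by (cases "i = 1") auto

lemma end_le_last_start: "i \<in> {1..n} \<Longrightarrow> i < n \<Longrightarrow> d i \<le> b n"
  using ordered[of i n] first_last_listed by simp

lemma moved_point_listed:
  assumes "f1 y \<noteq> y" "a < y" "y < c"
  shows "\<exists>i\<in>{1..n}. b i < y \<and> y < d i"
proof -
  obtain p q where "orbital_ends f1 p q" "p < y" "y < q"
    using orbital_ends_exists[OF pl_f1 assms(1)] by blast
  moreover have "{p<..<q} \<inter> {a<..<c} \<noteq> {}" using calculation assms by auto
  ultimately show ?thesis using complete by blast
qed

lemma first_orbital_start: "a < b 1"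
  using f1_orbital_start_gt listed listed_bounds first_last_listed by blast

lemma listed_start_inside: "i \<in> {1..n} \<Longrightarrow> a < b i \<and> b i < c"
  using first_orbital_start first_start_le listed_bounds by fastforce

lemma last_orbital_end: "d n = c"
proof -
  have on: "orbital_ends f1 (b n) (d n)" using listed first_last_listed by blast
  have "d n \<le> c" using f1_orbital_end_le[OF on] listed_bounds first_last_listed by blast
  moreover have "\<not> d n < c"
  proof
    assume dc: "d n < c"
    define y where "y = f0 (d n)"
    have ad: "a < d n" using listed_bounds first_last_listed by blast
    then have y: "d n < y" "y < c" using shift_moves_up[OF shift_f0 ad dc] by (auto simp: y_def)
    have "f1 y = f0 y" using shifted_orbital_ends_agree[OF shift_f0 on] by (simp add: y_def)
    moreover have "y < f0 y" using up ad y by auto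
    ultimately obtain i where i: "i \<in> {1..n}" "b i < y" "y < d i"
      using moved_point_listed[of y] ad y by fastforce
    show False
    proof (cases "i < n")
      case True
      then have "d i \<le> b n" using end_le_last_start[OF i(1)] by simp
      moreover have "b n < d n" using listed_bounds first_last_listed by blast
      ultimately show False using i y by simp
    next
      case False
      then show False using i y by simp
    qed
  qed
  ultimately show ?thesis by simp
qed

lemma last_start_lt_first_start_image: "b n < f0 (b 1)"
proof (rule ccontr)
  assume "\<not> b n < f0 (b 1)"
  then have le: "f0 (b 1) \<le> b n" by simp
  have o1: "orbital_ends f1 (b 1) (d 1)" using listed first_last_listed by blast
  have b1: "a < b 1" "b 1 < c" using listed_start_inside first_last_listed by blast+
  define y where "y = f0 (b 1)"
  have y: "b 1 < y" "y < c" using shift_moves_up[OF shift_f0 b1] by (auto simp: y_def)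
  have f1y: "f1 y = f0 y" using shifted_orbital_ends_agree[OF shift_f0 o1] by (simp add: y_def)
  moreover have "y < f0 y" using up b1 y by auto
  ultimately obtain j where j: "j \<in> {1..n}" "b j < y" "y < d j"
    using moved_point_listed[of y] b1 y by fastforce
  have "j \<noteq> n" using j le by (auto simp: y_def)
  then have "d j \<le> b n" using end_le_last_start[OF j(1)] j(1) by simp
  then have "d j < c" using listed_start_inside first_last_listed by fastforce
  then have "d j \<le> f0 (b j)"
    using f1_orbital_inside_short listed listed_start_inside j(1) by blast
  moreover have "f0 (b j) < f0 y" using j(2) pl_f0 by simp
  moreover have "f1 y < d j"
    using orbital_ends_maps_into[OF pl_homeo_strict_mono[OF pl_f1]] listed j by blast
  ultimately show False using f1y by simp
qed

lemma f0_eq_f1_from_last_start_image: "\<forall>x\<in>{f0 (b n)..c}. f0 x = f1 x"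
proof -
  have "orbital_ends f1 (b n) c" using listed[OF first_last_listed(2)] last_orbital_end by simp
  then show ?thesis
    using f0_eq_f1_beyond_orbital listed_start_inside first_last_listed by blast
qed

lemma last_start_image_bounds: "f0 (b n) \<in> {0..1} \<and> f0 (b n) < c"
  using shift_moves_up[OF shift_f0] listed_start_inside[OF first_last_listed(2)]
    bump_in_unit_interval by fastforce

end

theorem lemma2p5:
  fixes f0 f1 :: "real \<Rightarrow> real" and a c :: real and n :: nat and b d :: "nat \<Rightarrow> real"
  assumes "PL0 f0" and "PL0 f1"
    and "commg (conjg f1 f0) (rmul f0 (rinv f1)) = id"
    and "commg (rmul f0 (rinv f1)) (conjg f1 (rmul f0 f0)) = id"
    and "a < c" and "up_bump f0 {a<..<c}"
    and "\<not> orbital f1 {a<..<c}"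
    and "n \<ge> 1"
    and orbs: "\<forall>i\<in>{1..n}. b i < d i \<and> orbital f1 {b i<..<d i} \<and> {b i<..<d i} \<inter> {a<..<c} \<noteq> {}"
    and incr: "\<forall>i\<in>{1..n}. \<forall>j\<in>{1..n}. i < j \<longrightarrow> d i \<le> b j"
    and all: "\<forall>B. orbital f1 B \<and> B \<inter> {a<..<c} \<noteq> {} \<longrightarrow> (\<exists>i\<in>{1..n}. B = {b i<..<d i})"
  shows "a < b 1
    \<and> (\<exists>p. 0 \<le> p \<and> p < c \<and> (\<forall>x\<in>{p..c}. f0 x = f1 x))
    \<and> d n = c
    \<and> (\<forall>p\<in>{0..1}. (\<forall>x\<in>{p..c}. f0 x = f1 x) \<and>
         (\<forall>q\<in>{0..1}. (\<forall>x\<in>{q..c}. f0 x = f1 x) \<longrightarrow> p \<le> q)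
       \<longrightarrow> f0 (b n) \<ge> p)
    \<and> f0 (b 1) > b n"
proof -
  interpret listed_f1_orbitals f0 f1 a c n b d
  proof unfold_locales
    show "pl_homeo f0" "pl_homeo f1" using PL0_imp_pl_homeo assms(1,2) by blast+
    show "commg (conjg f1 f0) (rmul f0 (rinv f1)) = id"
      and "commg (rmul f0 (rinv f1)) (conjg f1 (rmul f0 f0)) = id" by (fact assms(3,4))+
    show "orbital_ends f0 a c" "\<forall>x\<in>{a<..<c}. x < f0 x" "\<not> orbital_ends f1 a c"
      using assms(5-7) orbital_iff_orbital_ends[OF assms(5)] by (auto simp: up_bump_def)
    show "1 \<le> n" by (fact assms(8))
    show "orbital_ends f1 (b i) (d i) \<and> {b i<..<d i} \<inter> {a<..<c} \<noteq> {}" if "i \<in> {1..n}" for i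
      using orbs orbital_iff_orbital_ends that by blast
    show "d i \<le> b j" if "i \<in> {1..n}" "j \<in> {1..n}" "i < j" for i j
      using incr that by blast
    show "\<exists>i\<in>{1..n}. p = b i \<and> q = d i"
      if "orbital_ends f1 p q" "{p<..<q} \<inter> {a<..<c} \<noteq> {}" for p q
      using orbital_ends_in_family[OF all that] .
  qed
  have "\<exists>p. 0 \<le> p \<and> p < c \<and> (\<forall>x\<in>{p..c}. f0 x = f1 x)"
    and "\<forall>p\<in>{0..1}. (\<forall>x\<in>{p..c}. f0 x = f1 x) \<and>
         (\<forall>q\<in>{0..1}. (\<forall>x\<in>{q..c}. f0 x = f1 x) \<longrightarrow> p \<le> q) \<longrightarrow> f0 (b n) \<ge> p"
    using f0_eq_f1_from_last_start_image last_start_image_bounds atLeastAtMost_iff by blast+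
  then show ?thesis
    using first_orbital_start last_orbital_end last_start_lt_first_start_image by blast
qed

end
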